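(* Let $\mathcal{S}^1$, $l\in K$, $\sigma\in\{+1,-1\}$ and the polyhedron $\mathcal{C}^l$ be as described in the context. Let $\bar{\pi}^l$ be an extreme point of $\mathcal{C}^l$ whose corresponding inequality is a non-trivial facet-defining inequality of $\mathrm{conv}(\mathcal{S}^1)$. Then $\bar{\pi}^l$ can be scaled in such a way that all of its components are $0$ or $1$.
   Context: Let $N=\{1,\dots,n\}$. Let $\Xi=\{x\in\mathbb{R}^n : Ex\ge f,\ 0\le x\le u\}$ be a network polytope of a directed network $G=(V,A)$ with arc set $A$ identified with $N$ ($x_i$ is the flow on arc $i$): the rows of $Ex\ge f$, indexed by a set $T$, are, for each node $v\in V$, the positive flow-balance inequality $\sum_{a\in\delta^+(v)}x_a-\sum_{a\in\delta^-(v)}x_a\ge f_v$ and the negative flow-balance inequality $-\sum_{a\in\delta^+(v)}x_a+\sum_{a\in\delta^-(v)}x_a\ge -f_v$ (here $\delta^+(v),\delta^-(v)$ are the sets of outgoing and incoming arcs of $v$); $u\in\mathbb{R}^n$ is the capacity vector. Let $\Delta_1=\{y_1\in\mathbb{R}: 0\le y_1\le 1\}$, $K=N$, and $\mathcal{S}^1=\{(x,y_1,z)\in\Xi\times\Delta_1\times\mathbb{R}^n : y_1x_k=z_k\ \forall k\in K\}$; for $k\in K$ let $A^k\in\mathbb{R}^{1\times n}$ be the unit row vector with $A^k_{1k}=1$, so the $k$-th bilinear constraint is $y_1A^kx=z_k$. Let $K_l=K\setminus\{l\}$. The vector $\pi^l=(\beta^+,\beta^-,\gamma^1,\theta,\eta^1,\rho^1,\lambda,\mu)$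 has $\beta^\pm\in\mathbb{R}^{K_l}_+$, $\gamma^1,\theta\in\mathbb{R}^T_+$, $\eta^1,\rho^1,\lambda,\mu\in\mathbb{R}^n_+$, and $\mathcal{C}^l=\{\pi^l\ge 0 : \sum_{k\in K_l}A^k_{1i}(\beta^+_k-\beta^-_k)+\sum_{t\in T}E_{ti}(\gamma^1_t-\theta_t)+\eta^1_i-\rho^1_i-\lambda_i+\mu_i=\sigma A^l_{1i}\ \ \forall i\in N\}$. The inequality corresponding to $\pi^l\in\mathcal{C}^l$ is the linear inequality obtained by summing: $(\beta^+_k-\beta^-_k)(y_1x_k-z_k)=0$ for $k\in K_l$; $\gamma^1_t\,y_1(E_{t\cdot}x-f_t)\ge0$ and $\theta_t(1-y_1)(E_{t\cdot}x-f_t)\ge 0$ for $t\in T$; $\eta^1_i\,y_1x_i\ge0$, $\rho^1_i\,y_1(u_i-x_i)\ge0$, $\lambda_i(1-y_1)x_i\ge0$, $\mu_i(1-y_1)(u_i-x_i)\ge0$ for $i\in N$; and the base equality $y_1x_l-z_l=0$ multiplied by $-\sigma$ (so that, by the defining equations of $\mathcal{C}^l$, all bilinear terms $y_1x_i$ cancel). A facet-defining inequality of $\mathrm{conv}(\mathcal{S}^1)$ is non-trivial if it is not implied by the linear constraints describing $\Xi$ and $\Delta_1$. *)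

theory Defs
  imports "HOL-Analysis.Analysis"
begin

text \<open>Network data: arcs are the elements of the finite type 'n (this is N, with n = CARD('n)),
 nodes are the elements of the finite type 'v (this is V).
 Rows of E x \<ge> f are indexed by T = 'v \<times> bool: (v, True) is the positive and
 (v, False) the negative flow-balance inequality of node v.\<close>

definition Emat :: "('n \<Rightarrow> 'v) \<Rightarrow> ('n \<Rightarrow> 'v) \<Rightarrow> 'v \<times> bool \<Rightarrow> 'n \<Rightarrow> real" where
  "Emat tail head t i =
     (let c = (if tail i = fst t then 1 else 0) - (if head i = fst t then 1 else 0)
      in if snd t then c else - c)"

definition frhs :: "('v \<Rightarrow> real) \<Rightarrow> 'v \<times> bool \<Rightarrow> real" where
  "frhs fv t = (if snd t then fv (fst t) else - fv (fst t))"

definition Erow :: "('n::finite \<Rightarrow> 'v) \<Rightarrow> ('n \<Rightarrow> 'v) \<Rightarrow> 'v \<times> bool \<Rightarrow> real^'n \<Rightarrow> real" where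
  "Erow tail head t x = (\<Sum>i\<in>UNIV. Emat tail head t i * x $ i)"

definition Arow :: "'n \<Rightarrow> 'n \<Rightarrow> real" where
  "Arow k i = (if i = k then 1 else 0)"

definition Xi :: "('n::finite \<Rightarrow> 'v::finite) \<Rightarrow> ('n \<Rightarrow> 'v) \<Rightarrow> ('v \<Rightarrow> real) \<Rightarrow> real^'n \<Rightarrow> (real^'n) set" where
  "Xi tail head fv u = {x. (\<forall>t. Erow tail head t x \<ge> frhs fv t) \<and> (\<forall>i. 0 \<le> x $ i \<and> x $ i \<le> u $ i)}"

definition S1 :: "('n::finite \<Rightarrow> 'v::finite) \<Rightarrow> ('n \<Rightarrow> 'v) \<Rightarrow> ('v \<Rightarrow> real) \<Rightarrow> real^'n
      \<Rightarrow> ((real^'n) \<times> real \<times> (real^'n)) set" where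
  "S1 tail head fv u = {(x, y, z). x \<in> Xi tail head fv u \<and> 0 \<le> y \<and> y \<le> 1 \<and>
      (\<forall>k. y * (\<Sum>i\<in>UNIV. Arow k i * x $ i) = z $ k)}"

text \<open>Multiplier vectors
  \<pi>^l = (\<beta>+, \<beta>-, \<gamma>^1, \<theta>, \<eta>^1, \<rho>^1, \<lambda>, \<mu>).
  \<beta>+ and \<beta>- are indexed by K_l = N - {l}; they are stored as vectors over N whose
  l-th component is required to be 0 (see Cl), so that they carry exactly the K_l coordinates.\<close>
type_synonym ('n, 'v) mult =
  "(real^'n) \<times> (real^'n) \<times> (real^('v \<times> bool)) \<times> (real^('v \<times> bool)) \<times> (real^'n) \<times> (real^'n) \<times> (real^'n) \<times> (real^'n)"

definition Cl :: "('n::finite \<Rightarrow> 'v::finite) \<Rightarrow> ('n \<Rightarrow> 'v) \<Rightarrow> 'n \<Rightarrow> real \<Rightarrow> ('n, 'v) mult set" where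
  "Cl tail head l \<sigma> = {(bp, bm, g, th, et, rh, la, mu).
     bp $ l = 0 \<and> bm $ l = 0 \<and>
     (\<forall>k. bp $ k \<ge> 0 \<and> bm $ k \<ge> 0 \<and> et $ k \<ge> 0 \<and> rh $ k \<ge> 0 \<and> la $ k \<ge> 0 \<and> mu $ k \<ge> 0) \<and>
     (\<forall>t. g $ t \<ge> 0 \<and> th $ t \<ge> 0) \<and>
     (\<forall>i. (\<Sum>k\<in>UNIV - {l}. Arow k i * (bp $ k - bm $ k))
          + (\<Sum>t\<in>UNIV. Emat tail head t i * (g $ t - th $ t))
          + et $ i - rh $ i - la $ i + mu $ i = \<sigma> * Arow l i)}"

text \<open>For \<pi>^l in C^l all bilinear terms y_1 x_i cancel, so this is an
  affine function of (x, y_1, z) and the inequality is ineq_fun ... p \<ge> 0.\<close>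
definition ineq_fun :: "('n::finite \<Rightarrow> 'v::finite) \<Rightarrow> ('n \<Rightarrow> 'v) \<Rightarrow> ('v \<Rightarrow> real) \<Rightarrow> real^'n
      \<Rightarrow> 'n \<Rightarrow> real \<Rightarrow> ('n, 'v) mult \<Rightarrow> (real^'n) \<times> real \<times> (real^'n) \<Rightarrow> real" where
  "ineq_fun tail head fv u l \<sigma> \<pi> p =
     (case \<pi> of (bp, bm, g, th, et, rh, la, mu) \<Rightarrow>
      (case p of (x, y, z) \<Rightarrow>
        (\<Sum>k\<in>UNIV - {l}. (bp $ k - bm $ k) * (y * (\<Sum>i\<in>UNIV. Arow k i * x $ i) - z $ k))
      + (\<Sum>t\<in>UNIV. g $ t * (y * (Erow tail head t x - frhs fv t)))
      + (\<Sum>t\<in>UNIV. th $ t * ((1 - y) * (Erow tail head t x - frhs fv t)))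
      + (\<Sum>i\<in>UNIV. et $ i * (y * x $ i) + rh $ i * (y * (u $ i - x $ i))
                  + la $ i * ((1 - y) * x $ i) + mu $ i * ((1 - y) * (u $ i - x $ i)))
      - \<sigma> * (y * (\<Sum>i\<in>UNIV. Arow l i * x $ i) - z $ l)))"

definition facet_defining :: "(('a::euclidean_space) \<Rightarrow> real) \<Rightarrow> 'a set \<Rightarrow> bool" where
  "facet_defining h S \<longleftrightarrow>
     (\<forall>p\<in>convex hull S. h p \<ge> 0) \<and> {p \<in> convex hull S. h p = 0} facet_of (convex hull S)"

text \<open>Non-trivial: not implied by the linear constraints describing \<Xi> and \<Delta>_1
  (i.e. violated by some (x, y_1, z) with x \<in> \<Xi>, 0 \<le> y_1 \<le> 1, z arbitrary).\<close>
definition nontrivial :: "('n::finite \<Rightarrow> 'v::finite) \<Rightarrow> ('n \<Rightarrow> 'v) \<Rightarrow> ('v \<Rightarrow> real) \<Rightarrow> real^'n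
      \<Rightarrow> ((real^'n) \<times> real \<times> (real^'n) \<Rightarrow> real) \<Rightarrow> bool" where
  "nontrivial tail head fv u h \<longleftrightarrow>
     \<not> (\<forall>x y z. x \<in> Xi tail head fv u \<and> 0 \<le> y \<and> y \<le> 1 \<longrightarrow> h (x, y, z) \<ge> 0)"

definition comps01 :: "('n::finite, 'v::finite) mult \<Rightarrow> bool" where
  "comps01 \<pi> = (case \<pi> of (bp, bm, g, th, et, rh, la, mu) \<Rightarrow>
     (\<forall>k. bp $ k \<in> {0,1} \<and> bm $ k \<in> {0,1} \<and> et $ k \<in> {0,1} \<and> rh $ k \<in> {0,1}
          \<and> la $ k \<in> {0,1} \<and> mu $ k \<in> {0,1}) \<and>
     (\<forall>t. g $ t \<in> {0,1} \<and> th $ t \<in> {0,1}))"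

end

theory Submission
  imports Defs
begin

(* C^l is a polyhedron in standard form: \<pi> \<ge> 0 subject to one equation per arc i, stating that
   the coefficient of y_1 x_i in the aggregated inequality is \<sigma> A^l_i. At an extreme point no
   nonzero direction supported on the support of \<pi> solves the homogeneous equations. The six
   multipliers of an arc enter these equations only through their signed sum, the arc weight, and
   the four multipliers of a node only through the node weight; so at most one multiplier per arc
   and per node is nonzero, and it equals the absolute value of that weight. Rescaling \<pi> arc- and
   node-wise shows moreover that every connected component of the arcs of zero weight contains a
   node of zero weight; together with the single inhomogeneous equation at arc l this confines all
   weights to {-1, 0, 1}. Hence \<pi> is itself a 0/1 vector. *)

lemma eventually_nonneg_perturbation:
  fixes x d :: "'a::euclidean_space"
  assumes "\<forall>b\<in>Basis. 0 \<le> x \<bullet> b" and "\<forall>b\<in>Basis. x \<bullet> b = 0 \<longrightarrow> d \<bullet> b = 0"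
  shows "\<forall>\<^sub>F s in nhds 0. \<forall>b\<in>Basis. 0 \<le> (x + s *\<^sub>R d) \<bullet> b"
proof -
  have "\<forall>\<^sub>F s in nhds 0. 0 \<le> x \<bullet> b + s * (d \<bullet> b)" if b: "b \<in> Basis" for b
  proof (cases "x \<bullet> b = 0")
    case True
    then show ?thesis using assms b by simp
  next
    case False
    then have pos: "0 < x \<bullet> b" using assms b by (simp add: order_less_le)
    have "((\<lambda>s. x \<bullet> b + s * (d \<bullet> b)) \<longlongrightarrow> x \<bullet> b + 0 * (d \<bullet> b)) (nhds 0)"
      by (intro tendsto_intros filterlim_ident)
    then have "\<forall>\<^sub>F s in nhds 0. 0 < x \<bullet> b + s * (d \<bullet> b)"
      using order_tendstoD(1) pos by simp
    then show ?thesis by (rule eventually_mono) (rule less_imp_le)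
  qed
  then show ?thesis by (simp add: eventually_ball_finite inner_add_left)
qed

lemma extreme_point_of_direction_zero:
  fixes x d :: "'a::real_normed_vector"
  assumes "x extreme_point_of S" and "\<forall>\<^sub>F s in nhds 0. x + s *\<^sub>R d \<in> S"
  shows "d = 0"
proof (rule ccontr)
  assume "d \<noteq> 0"
  obtain e where "e > 0" and e: "\<And>s. \<bar>s\<bar> < e \<Longrightarrow> x + s *\<^sub>R d \<in> S"
    using assms(2) by (auto simp: eventually_nhds_metric dist_real_def)
  define a where "a = x + (e / 2) *\<^sub>R d"
  define b where "b = x - (e / 2) *\<^sub>R d"
  have "a \<in> S" "b \<in> S"
    using e[of "e / 2"] e[of "- e / 2"] \<open>e > 0\<close> by (simp_all add: a_def b_def)
  have "a - b = e *\<^sub>R d" by (simp add: a_def b_def flip: scaleR_add_left)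
  then have "a \<noteq> b" using \<open>d \<noteq> 0\<close> \<open>e > 0\<close> by auto
  moreover have "midpoint a b = x"
    by (simp add: midpoint_def a_def b_def flip: scaleR_2)
  ultimately have "x \<in> open_segment a b"
    using midpoint_in_open_segment[of a b] by simp
  then show False using assms(1) \<open>a \<in> S\<close> \<open>b \<in> S\<close> by (auto simp: extreme_point_of_def)
qed

lemma rigid_signed_sum_entry:
  fixes x c :: "'j \<Rightarrow> real"
  assumes "finite J" and signs: "\<forall>k\<in>J. c k \<in> {-1, 1}" and nonneg: "\<forall>k\<in>J. 0 \<le> x k"
    and rigid: "\<And>a. \<forall>k\<in>J. x k = 0 \<longrightarrow> a k = 0 \<Longrightarrow> (\<Sum>k\<in>J. c k * a k) = 0 \<Longrightarrow> \<forall>k\<in>J. a k = 0"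
    and "j \<in> J"
  shows "x j \<in> {0, \<bar>\<Sum>k\<in>J. c k * x k\<bar>}"
proof (cases "x j = 0")
  case False
  define S where "S = (\<Sum>k\<in>J. c k * x k)"
  define a where "a k = x k - (if k = j then c j * S else 0)" for k
  have cj: "c j \<in> {-1, 1}" using signs \<open>j \<in> J\<close> by auto
  then have "c k * a k = c k * x k - (if k = j then S else 0)" for k
    by (auto simp: a_def algebra_simps)
  then have "(\<Sum>k\<in>J. c k * a k) = S - S"
    using \<open>finite J\<close> \<open>j \<in> J\<close> by (simp add: S_def sum_subtractf)
  then have "\<forall>k\<in>J. a k = 0" using False by (intro rigid) (auto simp: a_def)
  then have "x j = c j * S" using \<open>j \<in> J\<close> by (simp add: a_def)
  then show ?thesis using cj nonneg \<open>j \<in> J\<close> by (auto simp: S_def)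
qed simp

definition node_weight :: "('n::finite, 'v::finite) mult \<Rightarrow> 'v \<Rightarrow> real" where
  "node_weight \<pi> v = (case \<pi> of (bp, bm, g, th, et, rh, la, mu) \<Rightarrow>
     (g $ (v, True) - th $ (v, True)) - (g $ (v, False) - th $ (v, False)))"

definition arc_weight :: "('n::finite, 'v::finite) mult \<Rightarrow> 'n \<Rightarrow> real" where
  "arc_weight \<pi> i = (case \<pi> of (bp, bm, g, th, et, rh, la, mu) \<Rightarrow>
     bp $ i - bm $ i + et $ i - rh $ i - la $ i + mu $ i)"

(* The coefficient of y_1 x_i in the aggregated inequality, not counting the base equality. *)
definition bilinear_coeff :: "('n::finite \<Rightarrow> 'v::finite) \<Rightarrow> ('n \<Rightarrow> 'v) \<Rightarrow> ('n, 'v) mult \<Rightarrow> 'n \<Rightarrow> real" where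
  "bilinear_coeff tail head \<pi> i = arc_weight \<pi> i + node_weight \<pi> (tail i) - node_weight \<pi> (head i)"

lemma node_weight_add_scaleR: "node_weight (\<pi> + s *\<^sub>R d) v = node_weight \<pi> v + s * node_weight d v"
  by (simp add: node_weight_def split_beta algebra_simps)

lemma arc_weight_add_scaleR: "arc_weight (\<pi> + s *\<^sub>R d) i = arc_weight \<pi> i + s * arc_weight d i"
  by (simp add: arc_weight_def split_beta algebra_simps)

lemma bilinear_coeff_add_scaleR:
  "bilinear_coeff tail head (\<pi> + s *\<^sub>R d) i = bilinear_coeff tail head \<pi> i + s * bilinear_coeff tail head d i"
  by (simp add: bilinear_coeff_def node_weight_add_scaleR arc_weight_add_scaleR algebra_simps)

lemma sum_Emat:
  fixes tail head :: "'n::finite \<Rightarrow> 'v::finite"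
  shows "(\<Sum>t\<in>UNIV. Emat tail head t i * w $ t)
    = (w $ (tail i, True) - w $ (tail i, False)) - (w $ (head i, True) - w $ (head i, False))"
proof -
  have "(\<Sum>t\<in>UNIV. Emat tail head t i * w $ t) = (\<Sum>v\<in>UNIV. \<Sum>b\<in>UNIV. Emat tail head (v, b) i * w $ (v, b))"
    by (simp add: sum.cartesian_product)
  also have "\<dots> = (\<Sum>v\<in>UNIV. (if tail i = v then w $ (v, True) - w $ (v, False) else 0)
                             - (if head i = v then w $ (v, True) - w $ (v, False) else 0))"
    by (rule sum.cong) (auto simp: UNIV_bool Emat_def Let_def algebra_simps)
  finally show ?thesis by (simp add: sum_subtractf)
qed

lemma sum_Arow_remove:
  fixes l :: "'n::finite"
  shows "(\<Sum>k\<in>UNIV - {l}. Arow k i * w k) = (if i = l then 0 else w i)"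
  by (simp add: Arow_def if_distrib[of "\<lambda>a. a * _"] cong: if_cong)

lemmas ball_Basis_mult_simps = Basis_prod_def Basis_vec_def inner_axis ball_Un

lemma Cl_iff:
  assumes "\<pi> = (bp, bm, g, th, et, rh, la, mu)"
  shows "\<pi> \<in> Cl tail head l \<sigma> \<longleftrightarrow> bp $ l = 0 \<and> bm $ l = 0 \<and> (\<forall>b\<in>Basis. 0 \<le> \<pi> \<bullet> b) \<and>
           (\<forall>i. bilinear_coeff tail head \<pi> i = \<sigma> * Arow l i)"
proof -
  have "(\<Sum>k\<in>UNIV - {l}. Arow k i * (bp $ k - bm $ k)) + (\<Sum>t\<in>UNIV. Emat tail head t i * (g $ t - th $ t))
          + et $ i - rh $ i - la $ i + mu $ i = bilinear_coeff tail head \<pi> i"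
    if "bp $ l = 0" "bm $ l = 0" for i
    using sum_Emat[of tail head i "g - th"] that
    by (simp add: assms sum_Arow_remove bilinear_coeff_def arc_weight_def node_weight_def)
  then show ?thesis
    by (auto simp: assms Cl_def ball_Basis_mult_simps)
qed

lemma extreme_point_Cl_kernel_direction_zero:
  fixes tail head :: "'n::finite \<Rightarrow> 'v::finite"
  assumes ext: "\<pi> extreme_point_of Cl tail head l \<sigma>"
    and supp: "\<forall>b\<in>Basis. \<pi> \<bullet> b = 0 \<longrightarrow> d \<bullet> b = 0"
    and ker: "\<forall>i. bilinear_coeff tail head d i = 0"
  shows "d = 0"
proof (rule extreme_point_of_direction_zero[OF ext])
  obtain bp bm g th et rh la mu where \<pi>: "\<pi> = (bp, bm, g, th, et, rh, la, mu)"
    by (cases \<pi>) auto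
  obtain dbp dbm dg dth dEt drh dla dmu where d: "d = (dbp, dbm, dg, dth, dEt, drh, dla, dmu)"
    by (cases d) auto
  have "\<pi> \<in> Cl tail head l \<sigma>" using ext by (simp add: extreme_point_of_def)
  then have l: "bp $ l = 0" "bm $ l = 0" and nonneg: "\<forall>b\<in>Basis. 0 \<le> \<pi> \<bullet> b"
    and eq: "\<forall>i. bilinear_coeff tail head \<pi> i = \<sigma> * Arow l i"
    by (simp_all add: Cl_iff[OF \<pi>])
  have "dbp $ l = 0" "dbm $ l = 0"
    using supp l by (simp_all add: \<pi> d ball_Basis_mult_simps)
  show "\<forall>\<^sub>F s in nhds 0. \<pi> + s *\<^sub>R d \<in> Cl tail head l \<sigma>"
    using eventually_nonneg_perturbation[OF nonneg supp]
  proof (rule eventually_mono)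
    fix s :: real
    assume nonneg_s: "\<forall>b\<in>Basis. 0 \<le> (\<pi> + s *\<^sub>R d) \<bullet> b"
    have p: "\<pi> + s *\<^sub>R d = (bp + s *\<^sub>R dbp, bm + s *\<^sub>R dbm, g + s *\<^sub>R dg, th + s *\<^sub>R dth,
                                   et + s *\<^sub>R dEt, rh + s *\<^sub>R drh, la + s *\<^sub>R dla, mu + s *\<^sub>R dmu)"
      by (simp add: \<pi> d)
    have "bilinear_coeff tail head (\<pi> + s *\<^sub>R d) i = \<sigma> * Arow l i" for i
      using eq ker by (simp add: bilinear_coeff_add_scaleR)
    then show "\<pi> + s *\<^sub>R d \<in> Cl tail head l \<sigma>"
      unfolding Cl_iff[OF p] using nonneg_s l \<open>dbp $ l = 0\<close> \<open>dbm $ l = 0\<close>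
      by simp
  qed
qed

lemma extreme_point_Cl_arc_coords:
  fixes tail head :: "'n::finite \<Rightarrow> 'v::finite"
  assumes ext: "\<pi> extreme_point_of Cl tail head l \<sigma>" and \<pi>: "\<pi> = (bp, bm, g, th, et, rh, la, mu)"
  shows "{bp $ i, bm $ i, et $ i, rh $ i, la $ i, mu $ i} \<subseteq> {0, \<bar>arc_weight \<pi> i\<bar>}"
proof -
  define J where "J = {0, 1, 2, 3, 4, 5 :: nat}"
  define x where "x = (!) [bp $ i, bm $ i, et $ i, rh $ i, la $ i, mu $ i]"
  define c where "c = (!) [1, -1, 1, -1, -1, 1 :: real]"
  have rigid: "\<forall>k\<in>J. a k = 0" if supp: "\<forall>k\<in>J. x k = 0 \<longrightarrow> a k = 0" and sum: "(\<Sum>k\<in>J. c k * a k) = 0" for a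
  proof -
    define d :: "('n, 'v) mult"
      where "d = (axis i (a 0), axis i (a 1), 0, 0, axis i (a 2), axis i (a 3), axis i (a 4), axis i (a 5))"
    have "d = 0"
    proof (rule extreme_point_Cl_kernel_direction_zero[OF ext])
      show "\<forall>b\<in>Basis. \<pi> \<bullet> b = 0 \<longrightarrow> d \<bullet> b = 0"
        using supp by (simp add: \<pi> d_def J_def x_def ball_Basis_mult_simps) (simp add: axis_def)
      show "\<forall>j. bilinear_coeff tail head d j = 0"
        using sum by (simp add: d_def J_def c_def bilinear_coeff_def arc_weight_def node_weight_def axis_def)
    qed
    then show ?thesis by (simp add: d_def J_def zero_prod_def)
  qed
  have "\<pi> \<in> Cl tail head l \<sigma>" using ext by (simp add: extreme_point_of_def)
  then have "\<forall>b\<in>Basis. 0 \<le> \<pi> \<bullet> b" by (simp add: Cl_iff[OF \<pi>])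
  then have "0 \<le> bp $ i \<and> 0 \<le> bm $ i \<and> 0 \<le> et $ i \<and> 0 \<le> rh $ i \<and> 0 \<le> la $ i \<and> 0 \<le> mu $ i"
    by (simp add: \<pi> ball_Basis_mult_simps)
  then have nonneg: "\<forall>k\<in>J. 0 \<le> x k" by (simp add: J_def x_def)
  have fin: "finite J" and signs: "\<forall>k\<in>J. c k \<in> {-1, 1}" by (simp_all add: J_def c_def)
  have "(\<Sum>j\<in>J. c j * x j) = arc_weight \<pi> i"
    by (simp add: J_def c_def x_def \<pi> arc_weight_def)
  with rigid_signed_sum_entry[OF fin signs nonneg rigid]
  have "x k \<in> {0, \<bar>arc_weight \<pi> i\<bar>}" if "k \<in> J" for k
    using that by simp
  from this[of 0] this[of 1] this[of 2] this[of 3] this[of 4] this[of 5] show ?thesis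
    by (simp add: J_def x_def)
qed

lemma extreme_point_Cl_node_coords:
  fixes tail head :: "'n::finite \<Rightarrow> 'v::finite"
  assumes ext: "\<pi> extreme_point_of Cl tail head l \<sigma>" and \<pi>: "\<pi> = (bp, bm, g, th, et, rh, la, mu)"
  shows "{g $ (v, True), th $ (v, True), g $ (v, False), th $ (v, False)} \<subseteq> {0, \<bar>node_weight \<pi> v\<bar>}"
proof -
  define J where "J = {0, 1, 2, 3 :: nat}"
  define x where "x = (!) [g $ (v, True), th $ (v, True), g $ (v, False), th $ (v, False)]"
  define c where "c = (!) [1, -1, -1, 1 :: real]"
  have rigid: "\<forall>k\<in>J. a k = 0" if supp: "\<forall>k\<in>J. x k = 0 \<longrightarrow> a k = 0" and sum: "(\<Sum>k\<in>J. c k * a k) = 0" for a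
  proof -
    define dg where "dg = axis (v, True) (a 0) + axis (v, False) (a 2)"
    define dth where "dth = axis (v, True) (a 1) + axis (v, False) (a 3)"
    have "(0, 0, dg, dth, 0, 0, 0, 0) = (0 :: ('n, 'v) mult)"
    proof (rule extreme_point_Cl_kernel_direction_zero[OF ext])
      show "\<forall>b\<in>Basis. \<pi> \<bullet> b = 0 \<longrightarrow> (0, 0, dg, dth, 0, 0, 0, 0) \<bullet> b = 0"
        using supp by (simp add: \<pi> dg_def dth_def J_def x_def ball_Basis_mult_simps) (auto simp: axis_def)
      show "\<forall>j. bilinear_coeff tail head (0, 0, dg, dth, 0, 0, 0, 0) j = 0"
        using sum by (simp add: dg_def dth_def J_def c_def bilinear_coeff_def arc_weight_def node_weight_def axis_def)
    qed
    then have "dg $ t = 0" "dth $ t = 0" for t by (simp_all add: zero_prod_def)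
    from this[of "(v, True)"] this[of "(v, False)"] show ?thesis
      by (simp add: J_def dg_def dth_def axis_def)
  qed
  have "\<pi> \<in> Cl tail head l \<sigma>" using ext by (simp add: extreme_point_of_def)
  then have "\<forall>b\<in>Basis. 0 \<le> \<pi> \<bullet> b" by (simp add: Cl_iff[OF \<pi>])
  then have "0 \<le> g $ (v, True) \<and> 0 \<le> th $ (v, True) \<and> 0 \<le> g $ (v, False) \<and> 0 \<le> th $ (v, False)"
    by (simp add: \<pi> ball_Basis_mult_simps)
  then have nonneg: "\<forall>k\<in>J. 0 \<le> x k" by (simp add: J_def x_def)
  have fin: "finite J" and signs: "\<forall>k\<in>J. c k \<in> {-1, 1}" by (simp_all add: J_def c_def)
  have "(\<Sum>j\<in>J. c j * x j) = node_weight \<pi> v"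
    by (simp add: J_def c_def x_def \<pi> node_weight_def)
  with rigid_signed_sum_entry[OF fin signs nonneg rigid]
  have "x k \<in> {0, \<bar>node_weight \<pi> v\<bar>}" if "k \<in> J" for k
    using that by simp
  from this[of 0] this[of 1] this[of 2] this[of 3] show ?thesis
    by (simp add: J_def x_def)
qed

lemma extreme_point_Cl_node_fun_zero:
  fixes tail head :: "'n::finite \<Rightarrow> 'v::finite" and q :: "'v \<Rightarrow> real"
  assumes ext: "\<pi> extreme_point_of Cl tail head l \<sigma>"
    and ground: "\<forall>w. node_weight \<pi> w = 0 \<longrightarrow> q w = 0"
    and const: "\<forall>i. arc_weight \<pi> i = 0 \<longrightarrow> q (tail i) = q (head i)"
  shows "q v = 0"
proof -
  obtain bp bm g th et rh la mu where \<pi>: "\<pi> = (bp, bm, g, th, et, rh, la, mu)"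
    by (cases \<pi>) auto
  (* Where a weight vanishes, so does the numerator, by the hypotheses. *)
  define \<alpha> where "\<alpha> w = q w / node_weight \<pi> w" for w
  define \<beta> where "\<beta> i = (q (head i) - q (tail i)) / arc_weight \<pi> i" for i
  define arcs where "arcs y = (\<chi> i. \<beta> i * y $ i)" for y :: "real^'n"
  define nodes where "nodes y = (\<chi> t. \<alpha> (fst t) * y $ t)" for y :: "real^('v \<times> bool)"
  define d :: "('n, 'v) mult"
    where "d = (arcs bp, arcs bm, nodes g, nodes th, arcs et, arcs rh, arcs la, arcs mu)"
  have node: "node_weight d w = q w" for w
  proof -
    have "node_weight d w = \<alpha> w * node_weight \<pi> w"
      by (simp add: d_def \<pi> nodes_def node_weight_def algebra_simps)
    then show ?thesis using ground by (auto simp: \<alpha>_def)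
  qed
  have arc: "arc_weight d i = q (head i) - q (tail i)" for i
  proof -
    have "arc_weight d i = \<beta> i * arc_weight \<pi> i"
      by (simp add: d_def \<pi> arcs_def arc_weight_def algebra_simps)
    then show ?thesis using const by (auto simp: \<beta>_def)
  qed
  have "d = 0"
  proof (rule extreme_point_Cl_kernel_direction_zero[OF ext])
    show "\<forall>b\<in>Basis. \<pi> \<bullet> b = 0 \<longrightarrow> d \<bullet> b = 0"
      by (simp add: \<pi> d_def arcs_def nodes_def ball_Basis_mult_simps)
    show "\<forall>i. bilinear_coeff tail head d i = 0"
      by (simp add: bilinear_coeff_def node arc)
  qed
  then show "q v = 0" using node[of v] by (simp add: node_weight_def zero_prod_def)
qed

lemma extreme_point_Cl_weights_unit:
  fixes tail head :: "'n::finite \<Rightarrow> 'v::finite"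
  assumes \<sigma>: "\<sigma> \<in> {1, -1}" and ext: "\<pi> extreme_point_of Cl tail head l \<sigma>"
  shows "node_weight \<pi> v \<in> {-1, 0, 1}" and "arc_weight \<pi> i \<in> {-1, 0, 1}"
proof -
  define P where "P = node_weight \<pi>"
  define r where "r = arc_weight \<pi>"
  obtain bp bm g th et rh la mu where \<pi>: "\<pi> = (bp, bm, g, th, et, rh, la, mu)"
    by (cases \<pi>) auto
  have "\<pi> \<in> Cl tail head l \<sigma>" using ext by (simp add: extreme_point_of_def)
  then have eq: "r i + P (tail i) - P (head i) = \<sigma> * Arow l i" for i
    by (simp add: Cl_iff[OF \<pi>] bilinear_coeff_def P_def r_def)
  have level: "f (P w) = 0" if "f 0 = 0" and "r l = 0 \<longrightarrow> f (P (tail l)) = f (P (head l))"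
    for f :: "real \<Rightarrow> real" and w
  proof (rule extreme_point_Cl_node_fun_zero[OF ext, where q = "\<lambda>w. f (P w)"])
    show "\<forall>w. node_weight \<pi> w = 0 \<longrightarrow> f (P w) = 0" using that by (simp add: P_def)
    show "\<forall>i. arc_weight \<pi> i = 0 \<longrightarrow> f (P (tail i)) = f (P (head i))"
    proof (intro allI impI)
      fix i
      assume "arc_weight \<pi> i = 0"
      then show "f (P (tail i)) = f (P (head i))"
        using that(2) eq[of i] by (cases "i = l") (auto simp: Arow_def r_def)
    qed
  qed
  have "P w \<in> {-1, 0, 1} \<and> r i \<in> {-1, 0, 1}" for w i
  proof (cases "r l = 0")
    case False
    then have "P w = 0" for w using level[of "\<lambda>x. x"] by simp
    then show ?thesis using eq[of i] \<sigma> by (auto simp: P_def r_def Arow_def)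
  next
    case True
    define a where "a = P (tail l)"
    define b where "b = P (head l)"
    have "a - b = \<sigma>" using eq[of l] True by (simp add: Arow_def a_def b_def)
    have "a = 0 \<or> b = 0"
    proof (rule ccontr)
      assume "\<not> (a = 0 \<or> b = 0)"
      then have "(if a = 0 then 0 else 1 :: real) = 0"
        using level[of "\<lambda>x. if x = 0 then 0 else 1" "tail l"] by (simp add: a_def b_def)
      then show False using \<open>\<not> (a = 0 \<or> b = 0)\<close> by simp
    qed
    then have vanish: "(if P w = a \<or> P w = b then 0 else P w) = 0" for w
      using level[of "\<lambda>x. if x = a \<or> x = b then 0 else x" w] by (auto simp: a_def b_def)
    have vals: "P w \<in> {a, b}" for w
      using vanish[of w] \<open>a = 0 \<or> b = 0\<close> by (auto split: if_splits)
    have "P w \<in> {-1, 0, 1}" and "P w' - P w \<in> {-1, 0, 1}" for w w'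
      using vals[of w] vals[of w'] \<open>a - b = \<sigma>\<close> \<open>a = 0 \<or> b = 0\<close> \<sigma> by auto
    moreover have "r i = (if i = l then 0 else P (head i) - P (tail i))"
      using eq[of i] True by (auto simp: Arow_def)
    ultimately show ?thesis by simp
  qed
  then show "node_weight \<pi> v \<in> {-1, 0, 1}" and "arc_weight \<pi> i \<in> {-1, 0, 1}"
    by (simp_all add: P_def r_def)
qed

theorem proposition1:
  fixes tail head :: "'n::finite \<Rightarrow> 'v::finite"
    and fv :: "'v \<Rightarrow> real" and u :: "real^'n"
    and l :: 'n and \<sigma> :: real and \<pi> :: "('n, 'v) mult"
  assumes "\<sigma> \<in> {1, -1}"
    and "\<pi> extreme_point_of (Cl tail head l \<sigma>)"
    and "facet_defining (ineq_fun tail head fv u l \<sigma> \<pi>) (S1 tail head fv u)"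
    and "nontrivial tail head fv u (ineq_fun tail head fv u l \<sigma> \<pi>)"
  shows "\<exists>c>0. comps01 (c *\<^sub>R \<pi>)"
proof -
  obtain bp bm g th et rh la mu where \<pi>: "\<pi> = (bp, bm, g, th, et, rh, la, mu)"
    by (cases \<pi>) auto
  note unit = extreme_point_Cl_weights_unit[OF assms(1,2)]
  have "{0, \<bar>arc_weight \<pi> k\<bar>} \<subseteq> {0, 1}" for k using unit(2)[of k] by auto
  with extreme_point_Cl_arc_coords[OF assms(2) \<pi>]
  have "{bp $ k, bm $ k, et $ k, rh $ k, la $ k, mu $ k} \<subseteq> {0, 1}" for k by (rule subset_trans)
  moreover have "{0, \<bar>node_weight \<pi> v\<bar>} \<subseteq> {0, 1}" for v using unit(1)[of v] by auto
  with extreme_point_Cl_node_coords[OF assms(2) \<pi>]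
  have "{g $ (v, True), th $ (v, True), g $ (v, False), th $ (v, False)} \<subseteq> {0, 1}" for v
    by (rule subset_trans)
  ultimately have "comps01 \<pi>" by (simp add: \<pi> comps01_def split_paired_All all_bool_eq)
  then show ?thesis by (intro exI[of _ 1]) simp
qed

end
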